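(* Let $n$ be a positive integer. (a) If $\lambda^{3n/2}>(1+\sqrt2)C_1$, then $c_n>0$. (b) If $\lambda^{3n/2}>\frac{(1+\sqrt2)C_1}{\sqrt\lambda(\sqrt\lambda-1)}$, then $c_{n+1}>c_n$.
   Context: Standing setup: $p,q\in\mathbb{Z}$ are such that $x^3-px-q$ is irreducible over $\mathbb{Q}$ with exactly one real root $\theta$ (one has $3\theta^2-4p>0$ and $3\theta^2-p>0$). $K=\mathbb{Q}(\theta)\subset\mathbb{R}$, $\mathcal{O}_K$ its ring of integers. $d$ is a positive integer with $\mathcal{O}_K\subseteq\frac1d\mathbb{Z}[\theta]$. $\lambda\in\mathcal{O}_K$ is a unit with $\lambda>1$. For $n\ge1$ the rationals $a_n,b_n,c_n$ are defined by $a_n+b_n\theta+c_n\theta^2=\lambda^n$, and $X_n=a_n+pc_n-b_n\theta$, $Y_n=a_n+pc_n-c_n\theta^2$, $Z_n=b_n\theta-c_n\theta^2$, $k_n=dc_n$. Constants: $C_1=\max\{\sqrt2,\ \frac{\sqrt2|\theta|}{\sqrt{3\theta^2-4p}}\}$, $C_2=\frac{\sqrt d}{\sqrt{3\theta^2-p}}$. *)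

theory Defs
  imports "HOL-Analysis.Analysis" "HOL-Computational_Algebra.Polynomial"
begin

definition in_K :: "real \<Rightarrow> real \<Rightarrow> bool" where
  "in_K \<theta> x \<longleftrightarrow> (\<exists>r s t :: rat. x = of_rat r + of_rat s * \<theta> + of_rat t * \<theta>^2)"

definition in_OK :: "real \<Rightarrow> real \<Rightarrow> bool" where
  "in_OK \<theta> x \<longleftrightarrow> in_K \<theta> x \<and> algebraic_int x"

definition unit_OK :: "real \<Rightarrow> real \<Rightarrow> bool" where
  "unit_OK \<theta> x \<longleftrightarrow> in_OK \<theta> x \<and> x \<noteq> 0 \<and> in_OK \<theta> (inverse x)"

definition OK_sub_dZtheta :: "real \<Rightarrow> nat \<Rightarrow> bool" where
  "OK_sub_dZtheta \<theta> d \<longleftrightarrow> (\<forall>x. in_OK \<theta> x \<longrightarrow>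
      (\<exists>a b c :: int. x = (of_int a + of_int b * \<theta> + of_int c * \<theta>^2) / real d))"

definition C1 :: "int \<Rightarrow> real \<Rightarrow> real" where
  "C1 p \<theta> = max (sqrt 2) (sqrt 2 * \<bar>\<theta>\<bar> / sqrt (3 * \<theta>^2 - 4 * of_int p))"

end

theory Submission
  imports Defs "Berlekamp_Zassenhaus.Factor_Bound"
begin

text \<open>Let \<alpha> = -\<theta>/2 + i \<surd>(3\<theta>^2 - 4p)/2 be a non-real root of the cubic and \<mu> the image
  of \<lambda> under the embedding \<theta> \<mapsto> \<alpha> of K into \<complex>. The norm \<lambda>|\<mu>|^2 is a rational algebraic
  integer, hence an integer, and as \<lambda> is a unit it is 1, so |\<mu>| = \<lambda>^(-1/2). Solving for the
  \<theta>^2-coordinate of \<lambda>^n in terms of \<lambda>^n and its conjugate \<mu>^n gives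
  (3\<theta>^2 - p) c_n = \<lambda>^n - (Re \<mu>^n + \<kappa> Im \<mu>^n), and by Cauchy-Schwarz the error term is at
  most \<surd>(1 + \<kappa>^2) |\<mu>|^n \<le> (1 + \<surd>2) C1 \<lambda>^(-n/2). Both claims follow by comparing
  \<lambda>^n, resp. \<lambda>^(n+1) - \<lambda>^n, with this error.\<close>

interpretation of_rat_poly_hom: map_poly_inj_idom_hom "of_rat :: rat \<Rightarrow> 'a::field_char_0" ..

lemma poly_of_rat_quadratic:
  "poly (map_poly of_rat [:r, s, t:]) z = of_rat r + of_rat s * z + of_rat t * z^2"
  for z :: "'a::field_char_0"
  by (simp add: of_rat_hom.map_poly_pCons_hom algebra_simps power2_eq_square)

lemma irreducible_root_transfer:
  fixes f P :: "rat poly" and x :: "'a::field_char_0" and z :: "'b::field_char_0"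
  assumes "irreducible f"
    and "poly (map_poly of_rat f) x = 0" "poly (map_poly of_rat P) x = 0"
    and "poly (map_poly of_rat f) z = 0"
  shows "poly (map_poly of_rat P) z = 0"
proof (cases "f dvd P")
  case True
  then show ?thesis using assms(4) by (auto elim!: dvdE simp: hom_distribs)
next
  case False
  with assms(1) have "coprime f P"
    by (simp add: field_poly_irreducible_imp_prime prime_elem_imp_coprime)
  then have "fst (bezout_coefficients f P) * f + snd (bezout_coefficients f P) * P = 1"
    using bezout_coefficients_fst_snd[of f P] by simp
  from arg_cong[OF this, of "\<lambda>g. poly (map_poly (of_rat :: rat \<Rightarrow> 'a) g) x"]
  show ?thesis using assms(2,3) by (simp add: hom_distribs)
qed

lemma coeff_monic_factor_of_monic_int_poly_in_Ints:
  fixes g :: "int poly" and h k :: "rat poly"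
  assumes "of_int_poly g = h * k" and "lead_coeff g = 1" and "lead_coeff h = 1"
  shows "Polynomial.coeff h i \<in> \<int>"
proof -
  obtain r hi where hi: "rat_to_normalized_int_poly h = (r, hi)" by force
  from rat_to_normalized_int_poly[OF hi] have h: "h = Polynomial.smult r (of_int_poly hi)" and "r > 0"
    by auto
  from rat_to_int_factor_explicit[OF assms(1) hi] obtain w where "g = hi * Polynomial.smult (content g) w"
    by blast
  then have "lead_coeff hi * (content g * lead_coeff w) = 1"
    using assms(2) by (metis lead_coeff_mult lead_coeff_smult)
  then have "lead_coeff hi = 1 \<or> lead_coeff hi = -1"
    by (metis dvdI zdvd1_eq abs_1 abs_eq_iff')
  moreover have "r * of_int (lead_coeff hi) = 1"
    using assms(3) h \<open>r > 0\<close> by (simp add: lead_coeff_smult)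
  ultimately have "h = of_int_poly hi" using h \<open>r > 0\<close> by auto
  then show ?thesis by simp
qed

lemma linear_factors_dvd:
  fixes P :: "'a::idom poly"
  assumes "poly P a = 0" "poly P b = 0" "poly P c = 0" "a \<noteq> b" "a \<noteq> c" "b \<noteq> c"
  shows "[:-a, 1:] * [:-b, 1:] * [:-c, 1:] dvd P"
proof -
  obtain P1 where P1: "P = [:-a, 1:] * P1" using assms(1) by (auto simp: poly_eq_0_iff_dvd elim!: dvdE)
  with assms(2,4) obtain P2 where P2: "P1 = [:-b, 1:] * P2"
    by (auto simp: poly_eq_0_iff_dvd elim!: dvdE)
  with P1 assms(3,5,6) have "poly P2 c = 0" by simp
  then obtain P3 where "P2 = [:-c, 1:] * P3" by (auto simp: poly_eq_0_iff_dvd elim!: dvdE)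
  with P1 P2 have "P = ([:-a, 1:] * [:-b, 1:] * [:-c, 1:]) * P3" by (simp only: mult.assoc)
  then show ?thesis by (rule dvdI)
qed

lemma irreducible_imp_no_root:
  fixes f :: "'a::field poly"
  assumes "irreducible f" and "degree f \<ge> 2"
  shows "poly f x \<noteq> 0"
proof
  assume "poly f x = 0"
  then obtain k where k: "f = [:-x, 1:] * k" by (auto simp: poly_eq_0_iff_dvd elim!: dvdE)
  have "\<not> is_unit [:-x, 1:]" by (simp add: is_unit_pCons_iff)
  with irreducibleD[OF assms(1) k] have "is_unit k" by blast
  then obtain c where "k = [:c:]" using is_unit_poly_iff by blast
  with k have "degree f \<le> degree [:-x, 1:]" by (simp add: degree_smult_le)
  then show False using assms(2) by simp
qed

lemma symmetric_functions_of_quadratic_at_roots: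
  fixes a b c p q r s t :: "'a::comm_ring_1"
  assumes "a + b + c = 0" "a * b + a * c + b * c = - p" "a * b * c = q"
  defines "R z \<equiv> r + s * z + t * z^2"
  shows "R a + R b + R c = 3 * r + 2 * p * t"
    and "R a * R b + R a * R c + R b * R c
           = t^2 * p^2 - 3 * s * t * q - s^2 * p + 4 * r * t * p + 3 * r^2"
    and "R a * R b * R c = t^3 * q^2 - s * t^2 * p * q + s^3 * q + r * t^2 * p^2
           - 3 * r * s * t * q - r * s^2 * p + 2 * r^2 * t * p + r^3"
proof -
  have c: "c = - (a + b)" using assms(1) by (metis add.commute eq_neg_iff_add_eq_0)
  have p: "p = - (a * b + a * c + b * c)" and q: "q = a * b * c" using assms(2,3) by simp_all
  show "R a + R b + R c = 3 * r + 2 * p * t"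
    unfolding R_def p c by (simp add: algebra_simps power2_eq_square)
  show "R a * R b + R a * R c + R b * R c
          = t^2 * p^2 - 3 * s * t * q - s^2 * p + 4 * r * t * p + 3 * r^2"
    unfolding R_def p q c by (simp add: algebra_simps power2_eq_square)
  show "R a * R b * R c = t^3 * q^2 - s * t^2 * p * q + s^3 * q + r * t^2 * p^2
          - 3 * r * s * t * q - r * s^2 * p + 2 * r^2 * t * p + r^3"
    unfolding R_def p q c by (simp add: algebra_simps power2_eq_square power3_eq_cube)
qed

definition cubic_norm :: "int \<Rightarrow> int \<Rightarrow> rat \<Rightarrow> rat \<Rightarrow> rat \<Rightarrow> rat" where
  "cubic_norm p q r s t = t^3 * (of_int q)^2 - s * t^2 * of_int p * of_int q + s^3 * of_int q
     + r * t^2 * (of_int p)^2 - 3 * r * s * t * of_int q - r * s^2 * of_int p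
     + 2 * r^2 * t * of_int p + r^3"

definition cubic_charpoly :: "int \<Rightarrow> int \<Rightarrow> rat \<Rightarrow> rat \<Rightarrow> rat \<Rightarrow> rat poly" where
  "cubic_charpoly p q r s t = [:- cubic_norm p q r s t,
     t^2 * (of_int p)^2 - 3 * s * t * of_int q - s^2 * of_int p + 4 * r * t * of_int p + 3 * r^2,
     - (3 * r + 2 * of_int p * t), 1:]"

lemma linear_factors_eq_cubic_charpoly:
  fixes a b c :: "'a::field_char_0" and r s t :: rat and p q :: int
  assumes "a + b + c = 0" "a * b + a * c + b * c = - of_int p" "a * b * c = of_int q"
  defines "R z \<equiv> of_rat r + of_rat s * z + of_rat t * z^2"
  shows "[:- R a, 1:] * [:- R b, 1:] * [:- R c, 1:] = map_poly of_rat (cubic_charpoly p q r s t)"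
proof -
  note sym = symmetric_functions_of_quadratic_at_roots[OF assms(1-3),
      of "of_rat r" "of_rat s" "of_rat t", folded R_def]
  have "[:- R a, 1:] * [:- R b, 1:] * [:- R c, 1:]
      = [:- (R a * R b * R c), R a * R b + R a * R c + R b * R c, - (R a + R b + R c), 1:]"
    by (simp add: algebra_simps)
  also have "\<dots> = map_poly of_rat (cubic_charpoly p q r s t)"
    unfolding sym cubic_charpoly_def cubic_norm_def
    by (simp add: hom_distribs)
  finally show ?thesis .
qed

lemma abs_Re_plus_mult_Im_le:
  fixes z :: complex and k :: real
  shows "\<bar>Re z + k * Im z\<bar> \<le> sqrt (1 + k^2) * cmod z"
proof -
  have "(1 + k^2) * ((Re z)^2 + (Im z)^2) = (Re z + k * Im z)^2 + (k * Re z - Im z)^2"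
    by (simp add: algebra_simps power2_eq_square)
  then have "\<bar>Re z + k * Im z\<bar>^2 \<le> (1 + k^2) * ((Re z)^2 + (Im z)^2)"
    by simp
  then have "\<bar>Re z + k * Im z\<bar> \<le> sqrt ((1 + k^2) * ((Re z)^2 + (Im z)^2))"
    by (rule real_le_rsqrt)
  then show ?thesis by (simp add: real_sqrt_mult cmod_def)
qed

lemma sqrt_le_C1:
  fixes \<theta> :: real and p :: int
  assumes "3 * \<theta>^2 - 4 * of_int p > 0"
  shows "sqrt (1 + (3 * \<theta> / sqrt (3 * \<theta>^2 - 4 * of_int p))^2) \<le> (1 + sqrt 2) * C1 p \<theta>"
proof -
  define A where "A = 3 * \<theta>^2 - 4 * of_int p"
  define C where "C = C1 p \<theta>"
  have A: "A > 0" using assms by (simp add: A_def)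
  have C_ge: "sqrt 2 \<le> C" "sqrt 2 * \<bar>\<theta>\<bar> / sqrt A \<le> C"
    unfolding C_def C1_def A_def by simp_all
  have "(sqrt 2)^2 \<le> C^2"
    using C_ge(1) by (intro power_mono) simp_all
  moreover have "(sqrt 2 * \<bar>\<theta>\<bar> / sqrt A)^2 \<le> C^2"
    using C_ge(2) A by (intro power_mono) simp_all
  ultimately have C2: "2 \<le> C^2" "2 * (\<theta>^2 / A) \<le> C^2"
    using A by (simp_all add: power_divide power_mult_distrib)
  have "(3 * \<theta> / sqrt A)^2 = 9 * (\<theta>^2 / A)"
    using A by (simp add: power_divide power_mult_distrib)
  with C2 have "1 + (3 * \<theta> / sqrt A)^2 \<le> 5 * C^2"
    by linarith
  also have "\<dots> \<le> (1 + sqrt 2)^2 * C^2"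
    by (intro mult_right_mono) (simp_all add: power2_eq_square algebra_simps)
  finally have "sqrt (1 + (3 * \<theta> / sqrt A)^2) \<le> sqrt (((1 + sqrt 2) * C)^2)"
    by (simp add: power_mult_distrib)
  also have "\<dots> = (1 + sqrt 2) * C"
  proof -
    have "0 \<le> C" using C_ge(1) real_sqrt_ge_zero[of 2] by linarith
    then show ?thesis by simp
  qed
  finally show ?thesis by (simp add: A_def C_def)
qed

lemma powr_half_nat:
  fixes x :: real
  assumes "x > 0"
  shows "x powr (real k / 2) = sqrt x ^ k"
  using assms by (simp add: powr_half_sqrt[symmetric] powr_powr powr_realpow[symmetric])

lemma nonneg_Ints_mult_eq_1:
  fixes x y :: real
  assumes "x \<in> \<int>" "y \<in> \<int>" "x \<ge> 0" "y \<ge> 0" "x * y = 1"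
  shows "x = 1"
  using assms by (auto elim!: Ints_cases simp flip: of_int_mult simp: zmult_eq_1_iff)

lemma norm_power_Suc_diff_le:
  fixes z :: "'a::real_normed_div_algebra"
  shows "norm (z^(n + 1) - z^n) \<le> norm z ^ n * (norm z + 1)"
proof -
  have "z^(n + 1) - z^n = z^n * (z - 1)"
    by (simp add: right_diff_distrib power_commutes)
  then have "norm (z^(n + 1) - z^n) = norm z ^ n * norm (z - 1)"
    by (simp add: norm_mult norm_power)
  also have "\<dots> \<le> norm z ^ n * (norm z + 1)"
    using norm_triangle_ineq4[of z 1] by (intro mult_left_mono) simp_all
  finally show ?thesis .
qed

lemma of_real_of_rat [simp]: "of_real (of_rat x) = (of_rat x :: 'a::real_field)"
  by (cases x) (simp add: of_rat_rat)

lemma Re_of_rat [simp]: "Re (of_rat x) = of_rat x"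
  and Im_of_rat [simp]: "Im (of_rat x) = 0"
  and cnj_of_rat [simp]: "cnj (of_rat x) = of_rat x"
  using Re_complex_of_real[of "of_rat x"] Im_complex_of_real[of "of_rat x"]
    complex_cnj_complex_of_real[of "of_rat x"] by simp_all

lemma algebraic_int_not_rat_if_between_0_1:
  fixes x :: real
  assumes "algebraic_int x" "0 < x" "x < 1"
  shows "x \<notin> \<rat>"
proof
  assume "x \<in> \<rat>"
  with assms(1) have "x \<in> \<int>" by (rule rational_algebraic_int_is_int)
  with assms(2,3) show False by (auto elim!: Ints_cases)
qed

lemma depressed_cubic_vieta:
  fixes a b c p q x :: "'a::comm_ring_1"
  assumes "a + b + c = 0" "a * b + a * c + b * c = - p" "a * b * c = q"
  shows "x^3 - p * x - q = (x - a) * (x - b) * (x - c)"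
proof -
  have c: "c = - (a + b)" using assms(1) by (metis add.commute eq_neg_iff_add_eq_0)
  have p: "p = - (a * b + a * c + b * c)" and q: "q = a * b * c" using assms(2,3) by simp_all
  show ?thesis unfolding p q c by (simp add: algebra_simps power2_eq_square power3_eq_cube)
qed

locale cubic_one_real_root =
  fixes p q :: int and \<theta> :: real
  assumes irreducible: "irreducible ([:- of_int q, - of_int p, 0, 1:] :: rat poly)"
    and root: "\<theta>^3 - of_int p * \<theta> - of_int q = 0"
    and unique_root: "\<forall>x::real. x^3 - of_int p * x - of_int q = 0 \<longrightarrow> x = \<theta>"
begin

lemma poly_min_poly:
  "poly (map_poly of_rat [:- of_int q, - of_int p, 0, 1:]) z = z^3 - of_int p * z - of_int q"
  for z :: "'a::field_char_0"
  by (simp add: algebra_simps power3_eq_cube of_rat_minus)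

lemma discriminant_pos: "3 * \<theta>^2 - 4 * of_int p > 0"
proof (rule ccontr)
  assume "\<not> 3 * \<theta>^2 - 4 * of_int p > 0"
  then have "4 * of_int p - 3 * \<theta>^2 \<ge> 0" by simp
  define w where "w = sqrt (4 * of_int p - 3 * \<theta>^2)"
  have w: "w^2 = 4 * of_int p - 3 * \<theta>^2"
    unfolding w_def using \<open>4 * of_int p - 3 * \<theta>^2 \<ge> 0\<close> by (rule real_sqrt_pow2)
  have other_root: "x = \<theta>" if "x = (- \<theta> + w) / 2 \<or> x = (- \<theta> - w) / 2" for x
  proof -
    have "x^3 - of_int p * x - of_int q = (x - \<theta>) * (x^2 + \<theta> * x + \<theta>^2 - of_int p)"
      using root by (simp add: algebra_simps power2_eq_square power3_eq_cube)
    also have "x^2 + \<theta> * x + \<theta>^2 - of_int p = (3 * \<theta>^2 + w^2) / 4 - of_int p"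
      using that by (elim disjE; hypsubst; simp add: field_simps power2_eq_square)
    also have "\<dots> = 0" using w by simp
    finally show ?thesis using unique_root by simp
  qed
  from other_root[of "(- \<theta> + w) / 2"] other_root[of "(- \<theta> - w) / 2"] have "\<theta> = 0" "w = 0"
    by auto
  with root w have "p = 0" "q = 0" by simp_all
  then have "([:- of_int q, - of_int p, 0, 1:] :: rat poly) = [:0, 1:] * [:0, 0, 1:]" by simp
  from irreducibleD[OF irreducible this] show False by (simp add: is_unit_pCons_iff)
qed

definition alpha :: complex where
  "alpha = Complex (- \<theta> / 2) (sqrt (3 * \<theta>^2 - 4 * of_int p) / 2)"

lemma Im_alpha_pos: "Im alpha > 0"
  using discriminant_pos by (simp add: alpha_def)

lemma vieta:
  "of_real \<theta> + alpha + cnj alpha = 0"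
  "of_real \<theta> * alpha + of_real \<theta> * cnj alpha + alpha * cnj alpha = - of_int p"
  "of_real \<theta> * alpha * cnj alpha = of_int q"
proof -
  define v where "v = sqrt (3 * \<theta>^2 - 4 * of_int p) / 2"
  have v2: "v^2 = (3 * \<theta>^2 - 4 * of_int p) / 4"
    using discriminant_pos by (simp add: v_def power_divide)
  have alpha: "alpha = Complex (- \<theta> / 2) v" by (simp add: alpha_def v_def)
  show "of_real \<theta> + alpha + cnj alpha = 0"
    by (simp add: alpha complex_eq_iff)
  show "of_real \<theta> * alpha + of_real \<theta> * cnj alpha + alpha * cnj alpha = - of_int p"
    using v2 by (simp add: alpha complex_eq_iff power2_eq_square field_simps)
  have "\<theta>^2 / 4 + v^2 = \<theta>^2 - of_int p" using v2 by simp
  then have "\<theta> * (\<theta>^2 / 4 + v^2) = \<theta> * (\<theta>^2 - of_int p)" by simp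
  also have "\<dots> = \<theta>^3 - of_int p * \<theta>" by (simp add: algebra_simps power2_eq_square power3_eq_cube)
  finally have "\<theta> * (\<theta>^2 / 4 + v^2) = of_int q" using root by simp
  moreover have "of_real \<theta> * alpha * cnj alpha = of_real (\<theta> * (\<theta>^2 / 4 + v^2))"
    by (simp add: alpha complex_eq_iff power2_eq_square algebra_simps)
  ultimately show "of_real \<theta> * alpha * cnj alpha = of_int q" by simp
qed

lemma alpha_root: "alpha^3 - of_int p * alpha - of_int q = 0"
  and cnj_alpha_root: "(cnj alpha)^3 - of_int p * cnj alpha - of_int q = 0"
  by (simp_all add: depressed_cubic_vieta[OF vieta])

lemma root_transfer:
  fixes P :: "rat poly" and z :: complex
  assumes "poly (map_poly of_rat P) \<theta> = 0" and "z^3 - of_int p * z - of_int q = 0"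
  shows "poly (map_poly of_rat P) z = 0"
proof (rule irreducible_root_transfer[OF irreducible _ assms(1)])
  show "poly (map_poly of_rat [:- of_int q, - of_int p, 0, 1:]) \<theta> = 0"
    "poly (map_poly of_rat [:- of_int q, - of_int p, 0, 1:]) z = 0"
    using root assms(2) by (simp_all only: poly_min_poly)
qed

lemma root_transfer_int_poly:
  fixes g :: "int poly" and R :: "rat poly" and z :: complex
  assumes "poly (of_int_poly g) (poly (map_poly of_rat R) \<theta>) = 0"
    and "z^3 - of_int p * z - of_int q = 0"
  shows "poly (of_int_poly g) (poly (map_poly of_rat R) z) = 0"
proof -
  have map_g: "map_poly of_rat (of_int_poly g) = (of_int_poly g :: 'a::field_char_0 poly)"
    by (simp add: map_poly_map_poly o_def)
  have "poly (map_poly of_rat (of_int_poly g \<circ>\<^sub>p R)) z = 0"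
    by (rule root_transfer[OF _ assms(2)])
      (use assms(1) in \<open>simp add: of_rat_hom.map_poly_pcompose poly_pcompose map_g\<close>)
  then show ?thesis by (simp add: of_rat_hom.map_poly_pcompose poly_pcompose map_g)
qed

lemma conjugate_eq:
  fixes P Q :: "rat poly" and z :: complex
  assumes "poly (map_poly of_rat P) \<theta> = poly (map_poly of_rat Q) \<theta>"
    and "z^3 - of_int p * z - of_int q = 0"
  shows "poly (map_poly of_rat P) z = poly (map_poly of_rat Q) z"
  using root_transfer[of "P - Q" z] assms by (simp add: hom_distribs)

lemma Im_conjugate_neq_0:
  assumes "of_rat r + of_rat s * \<theta> + of_rat t * \<theta>^2 \<notin> \<rat>"
  shows "Im (of_rat r + of_rat s * alpha + of_rat t * alpha^2) \<noteq> 0"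
proof
  have Re_alpha: "Re alpha = - \<theta> / 2" by (simp add: alpha_def)
  have "Im (of_rat r + of_rat s * alpha + of_rat t * alpha^2) = Im alpha * (of_rat s - of_rat t * \<theta>)"
    by (simp add: power2_eq_square Re_alpha algebra_simps)
  moreover assume "Im (of_rat r + of_rat s * alpha + of_rat t * alpha^2) = 0"
  ultimately have st: "of_rat s = of_rat t * \<theta>" using Im_alpha_pos by simp
  show False
  proof (cases "t = 0")
    case True
    with st assms show False by simp
  next
    case False
    with st have "\<theta> = of_rat (s / t)" by (simp add: of_rat_divide)
    with root have "of_rat ((s / t)^3 - of_int p * (s / t) - of_int q) = (0::real)"
      by (simp add: of_rat_diff of_rat_mult of_rat_power of_rat_divide)
    then have "poly ([:- of_int q, - of_int p, 0, 1:] :: rat poly) (s / t) = 0"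
      by (simp add: algebra_simps power3_eq_cube)
    moreover have "degree ([:- of_int q, - of_int p, 0, 1:] :: rat poly) \<ge> 2" by simp
    ultimately show False
      using irreducible_imp_no_root[OF irreducible] by blast
  qed
qed

lemma conjugates_charpoly:
  fixes r s t :: rat
  defines "x \<equiv> of_rat r + of_rat s * \<theta> + of_rat t * \<theta>^2"
    and "\<mu> \<equiv> of_rat r + of_rat s * alpha + of_rat t * alpha^2"
  shows "[:- of_real x, 1:] * [:- \<mu>, 1:] * [:- cnj \<mu>, 1:] = map_poly of_rat (cubic_charpoly p q r s t)"
  using linear_factors_eq_cubic_charpoly[OF vieta, of r s t] by (simp add: x_def \<mu>_def)

lemma norm_eq_cubic_norm:
  fixes r s t :: rat
  defines "x \<equiv> of_rat r + of_rat s * \<theta> + of_rat t * \<theta>^2"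
    and "\<mu> \<equiv> of_rat r + of_rat s * alpha + of_rat t * alpha^2"
  shows "x * (cmod \<mu>)^2 = of_rat (cubic_norm p q r s t)"
proof -
  have factors: "[:- of_real x, 1:] * [:- \<mu>, 1:] * [:- cnj \<mu>, 1:]
      = map_poly of_rat (cubic_charpoly p q r s t)"
    unfolding x_def \<mu>_def by (rule conjugates_charpoly)
  have "of_real (x * (cmod \<mu>)^2) = of_real x * \<mu> * cnj \<mu>"
    by (simp only: of_real_mult complex_norm_square mult.assoc)
  also have "\<dots> = of_rat (cubic_norm p q r s t)"
    using arg_cong[OF factors, of "\<lambda>P. Polynomial.coeff P 0"]
    by (simp add: cubic_charpoly_def of_rat_minus mult_ac)
  finally show ?thesis by (metis of_real_eq_iff of_real_of_rat)
qed

lemma cubic_norm_in_Ints: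
  fixes r s t :: rat
  defines "x \<equiv> of_rat r + of_rat s * \<theta> + of_rat t * \<theta>^2"
    and "\<mu> \<equiv> of_rat r + of_rat s * alpha + of_rat t * alpha^2"
  assumes "algebraic_int x" and "x \<notin> \<rat>"
  shows "cubic_norm p q r s t \<in> \<int>"
proof -
  obtain g where g: "poly (of_int_poly g) x = 0" "lead_coeff g = 1"
    using assms(3) algebraic_int_altdef_ipoly by blast
  define gq where "gq = (of_int_poly g :: rat poly)"
  have map_gq: "map_poly of_rat gq = (of_int_poly g :: 'a::field_char_0 poly)"
    by (simp add: gq_def map_poly_map_poly o_def)
  have g_conjugate: "poly (of_int_poly g) (of_rat r + of_rat s * z + of_rat t * z^2) = 0"
    if "z^3 - of_int p * z - of_int q = 0" for z :: complex
    using root_transfer_int_poly[of g "[:r, s, t:]" z, OF _ that] g(1)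
    by (simp add: poly_of_rat_quadratic x_def)
  have "poly (of_int_poly g) (of_real x :: complex) = of_real (poly (of_int_poly g) x)"
    using of_real_hom.poly_map_poly[of "of_int_poly g" x] by (simp add: map_poly_map_poly o_def)
  then have roots: "poly (of_int_poly g) (of_real x :: complex) = 0"
    "poly (of_int_poly g) \<mu> = 0" "poly (of_int_poly g) (cnj \<mu>) = 0"
    using g_conjugate[OF alpha_root] g_conjugate[OF cnj_alpha_root] g(1)
    by (simp_all add: \<mu>_def)
  have "Im \<mu> \<noteq> 0" using Im_conjugate_neq_0 assms(4) by (simp add: x_def \<mu>_def)
  then have distinct: "of_real x \<noteq> \<mu>" "of_real x \<noteq> cnj \<mu>" "\<mu> \<noteq> cnj \<mu>"
    by (auto simp: complex_eq_iff)
  \<comment> \<open>The rational cubic with roots x, \<mu>, cnj \<mu> divides the monic integer polynomial of x,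
    so by Gauss's lemma its coefficients are integers.\<close>
  have "map_poly of_rat (cubic_charpoly p q r s t) dvd (map_poly of_rat gq :: complex poly)"
    using linear_factors_dvd[OF roots distinct]
    by (simp only: conjugates_charpoly x_def \<mu>_def map_gq)
  then obtain k where "gq = cubic_charpoly p q r s t * k"
    by (auto dest: of_rat_hom.dvd_map_poly_hom_imp_dvd elim: dvdE)
  then have "Polynomial.coeff (cubic_charpoly p q r s t) 0 \<in> \<int>"
    using g(2) by (intro coeff_monic_factor_of_monic_int_poly_in_Ints[of g _ k])
      (simp_all add: gq_def cubic_charpoly_def)
  then show ?thesis by (simp add: cubic_charpoly_def)
qed

lemma norm_in_Ints:
  assumes "algebraic_int (of_rat r + of_rat s * \<theta> + of_rat t * \<theta>^2)"
    and "of_rat r + of_rat s * \<theta> + of_rat t * \<theta>^2 \<notin> \<rat>"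
  shows "(of_rat r + of_rat s * \<theta> + of_rat t * \<theta>^2)
    * (cmod (of_rat r + of_rat s * alpha + of_rat t * alpha^2))^2 \<in> \<int>"
  using cubic_norm_in_Ints[OF assms] unfolding norm_eq_cubic_norm
  by (metis Ints_cases of_rat_of_int_eq Ints_of_int)

lemma unit_conjugate:
  assumes "unit_OK \<theta> lam" "lam > 1"
  obtains \<mu> where "cmod \<mu> = 1 / sqrt lam"
    and "\<And>m a b c. of_rat a + of_rat b * \<theta> + of_rat c * \<theta>^2 = lam^m \<Longrightarrow>
           of_rat a + of_rat b * alpha + of_rat c * alpha^2 = \<mu>^m"
proof -
  from assms(1) obtain r s t r' s' t' where
    lam: "lam = of_rat r + of_rat s * \<theta> + of_rat t * \<theta>^2" and int: "algebraic_int lam"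
    and inv: "inverse lam = of_rat r' + of_rat s' * \<theta> + of_rat t' * \<theta>^2"
    and inv_int: "algebraic_int (inverse lam)"
    unfolding unit_OK_def in_OK_def in_K_def by blast
  have "inverse lam \<notin> \<rat>"
    using assms(2) by (intro algebraic_int_not_rat_if_between_0_1 inv_int) (auto simp: inverse_less_1_iff)
  then have "lam \<notin> \<rat>" by auto
  define \<mu> where "\<mu> = poly (map_poly of_rat [:r, s, t:]) alpha"
  define \<mu>' where "\<mu>' = poly (map_poly of_rat [:r', s', t':]) alpha"
  have conj: "of_rat a + of_rat b * alpha + of_rat c * alpha^2 = \<mu>^m"
    if "of_rat a + of_rat b * \<theta> + of_rat c * \<theta>^2 = lam^m" for m a b c
  proof -
    have "poly (map_poly of_rat [:a, b, c:]) alpha = poly (map_poly of_rat ([:r, s, t:]^m)) alpha"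
      by (rule conjugate_eq[OF _ alpha_root])
        (simp only: poly_of_rat_quadratic of_rat_poly_hom.hom_power poly_power that lam)
    then show ?thesis
      by (simp only: poly_of_rat_quadratic of_rat_poly_hom.hom_power poly_power \<mu>_def)
  qed
  have "poly (map_poly of_rat ([:r, s, t:] * [:r', s', t':])) alpha = poly (map_poly of_rat 1) alpha"
    using assms(2)
    by (intro conjugate_eq[OF _ alpha_root])
      (simp only: poly_of_rat_quadratic of_rat_poly_hom.hom_mult of_rat_poly_hom.hom_one poly_mult
        poly_1 flip: lam inv, simp)
  then have "\<mu> * \<mu>' = 1"
    by (simp only: \<mu>_def \<mu>'_def of_rat_poly_hom.hom_mult of_rat_poly_hom.hom_one poly_mult poly_1)
  moreover have "lam * (cmod \<mu>)^2 \<in> \<int>" "inverse lam * (cmod \<mu>')^2 \<in> \<int>"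
    using norm_in_Ints[of r s t] norm_in_Ints[of r' s' t'] int inv_int \<open>lam \<notin> \<rat>\<close> \<open>inverse lam \<notin> \<rat>\<close>
    by (simp_all add: \<mu>_def \<mu>'_def poly_of_rat_quadratic flip: lam inv)
  ultimately have "lam * (cmod \<mu>)^2 = 1"
    using assms(2) nonneg_Ints_mult_eq_1[of "lam * (cmod \<mu>)^2" "inverse lam * (cmod \<mu>')^2"]
    by (simp add: field_simps flip: norm_mult power_mult_distrib)
  then have "sqrt lam * cmod \<mu> = 1"
    by (metis norm_ge_zero real_sqrt_mult real_sqrt_one real_sqrt_unique)
  then have "cmod \<mu> = 1 / sqrt lam"
    by (metis nonzero_eq_divide_eq mult.commute mult_zero_left zero_neq_one)
  with conj show thesis using that by blast
qed

definition kappa :: real where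
  "kappa = 3 * \<theta> / sqrt (3 * \<theta>^2 - 4 * of_int p)"

lemma theta_square_coeff_eq:
  "(3 * \<theta>^2 - of_int p) * of_rat c
     = (of_rat a + of_rat b * \<theta> + of_rat c * \<theta>^2)
       - (Re y + kappa * Im y)"
  if "y = of_rat a + of_rat b * alpha + of_rat c * alpha^2"
proof -
  define v where "v = sqrt (3 * \<theta>^2 - 4 * of_int p) / 2"
  have "v > 0" "v^2 = (3 * \<theta>^2 - 4 * of_int p) / 4"
    using discriminant_pos by (simp_all add: v_def power_divide)
  then have v: "v > 0" "of_int p = 3 * \<theta>^2 / 4 - v^2" by simp_all
  have Re: "Re y = of_rat a - of_rat b * \<theta> / 2 + of_rat c * (\<theta>^2 / 4 - v^2)"
    and Im: "Im y = (of_rat b - of_rat c * \<theta>) * v"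
    by (simp_all add: that alpha_def v_def power2_eq_square algebra_simps)
  have kappa: "kappa = 3 * \<theta> / (2 * v)" by (simp add: kappa_def v_def)
  show ?thesis unfolding Re Im kappa v(2) using v(1) by (simp add: field_simps power2_eq_square)
qed

lemma theta_square_coeff_factor_pos: "3 * \<theta>^2 - of_int p > 0"
  using discriminant_pos by (smt (verit) zero_le_power2)

lemma conjugate_term_bound: "\<bar>Re z + kappa * Im z\<bar> \<le> (1 + sqrt 2) * C1 p \<theta> * cmod z"
  using abs_Re_plus_mult_Im_le[of z kappa] sqrt_le_C1[OF discriminant_pos]
  unfolding kappa_def by (meson mult_right_mono norm_ge_zero order_trans)

lemma theta_square_coeff_pos:
  assumes "unit_OK \<theta> lam" "lam > 1"
    and "(1 + sqrt 2) * C1 p \<theta> < lam powr (3 * real n / 2)"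
    and "of_rat a + of_rat b * \<theta> + of_rat c * \<theta>^2 = lam^n"
  shows "c > 0"
proof -
  define \<sigma> where "\<sigma> = sqrt lam"
  define B where "B = (1 + sqrt 2) * C1 p \<theta>"
  have \<sigma>: "\<sigma> > 1" "lam = \<sigma>^2" using assms(2) by (simp_all add: \<sigma>_def)
  obtain \<mu> where \<mu>: "cmod \<mu> = 1 / \<sigma>"
    and conj: "of_rat a + of_rat b * alpha + of_rat c * alpha^2 = \<mu>^n"
    using unit_conjugate[OF assms(1,2)] assms(4) unfolding \<sigma>_def by metis
  have "B < \<sigma>^(3 * n)"
    using assms(2,3) powr_half_nat[of lam "3 * n"] by (simp add: B_def \<sigma>_def)
  have powers: "\<sigma>^(2 * n) = \<sigma>^n * \<sigma>^n" "\<sigma>^(3 * n) = \<sigma>^n * \<sigma>^n * \<sigma>^n"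
    by (simp_all add: numeral_3_eq_3 mult_2 power_add)
  have "0 < (\<sigma>^(3 * n) - B) / \<sigma>^n"
    using \<open>B < \<sigma>^(3 * n)\<close> \<sigma>(1) by simp
  also have "\<dots> = \<sigma>^(2 * n) - B * cmod (\<mu>^n)"
    unfolding powers using \<sigma>(1) by (simp add: norm_power \<mu> field_simps)
  also have "\<dots> \<le> lam^n - (Re (\<mu>^n) + kappa * Im (\<mu>^n))"
    using conjugate_term_bound[of "\<mu>^n"] by (simp add: \<sigma>(2) B_def power_mult)
  also have "\<dots> = (3 * \<theta>^2 - of_int p) * of_rat c"
    using theta_square_coeff_eq[OF conj[symmetric]] assms(4) by simp
  finally show "c > 0"
    using theta_square_coeff_factor_pos by (simp add: zero_less_mult_iff)
qed

lemma theta_square_coeff_increasing: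
  assumes "unit_OK \<theta> lam" "lam > 1"
    and "(1 + sqrt 2) * C1 p \<theta> / (sqrt lam * (sqrt lam - 1)) < lam powr (3 * real n / 2)"
    and "of_rat a + of_rat b * \<theta> + of_rat c * \<theta>^2 = lam^n"
    and "of_rat a' + of_rat b' * \<theta> + of_rat c' * \<theta>^2 = lam^(n + 1)"
  shows "c' > c"
proof -
  define \<sigma> where "\<sigma> = sqrt lam"
  define B where "B = (1 + sqrt 2) * C1 p \<theta>"
  have \<sigma>: "\<sigma> > 1" "lam = \<sigma>^2" using assms(2) by (simp_all add: \<sigma>_def)
  obtain \<mu> where \<mu>: "cmod \<mu> = 1 / \<sigma>"
    and conj: "of_rat a + of_rat b * alpha + of_rat c * alpha^2 = \<mu>^n"
      "of_rat a' + of_rat b' * alpha + of_rat c' * alpha^2 = \<mu>^(n + 1)"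
    using unit_conjugate[OF assms(1,2)] assms(4,5) unfolding \<sigma>_def by metis
  have "B < \<sigma>^(3 * n) * (\<sigma> * (\<sigma> - 1))"
    using assms(2,3) powr_half_nat[of lam "3 * n"] \<sigma>(1) by (simp add: B_def \<sigma>_def divide_less_eq)
  have powers: "\<sigma>^(2 * n) = \<sigma>^n * \<sigma>^n" "\<sigma>^(3 * n) = \<sigma>^n * \<sigma>^n * \<sigma>^n"
    by (simp_all add: numeral_3_eq_3 mult_2 power_add)
  have diff_bound: "cmod (\<mu>^(n + 1) - \<mu>^n) \<le> (1 / \<sigma>)^n * (1 / \<sigma> + 1)"
    using norm_power_Suc_diff_le[of \<mu> n] by (simp add: \<mu>)
  have "0 < (\<sigma> + 1) / \<sigma>^(n + 1) * (\<sigma>^(3 * n) * (\<sigma> * (\<sigma> - 1)) - B)"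
    using \<open>B < _\<close> \<sigma>(1) by simp
  also have "\<dots> = \<sigma>^(2 * n) * (\<sigma>^2 - 1) - B * ((1 / \<sigma>)^n * (1 / \<sigma> + 1))"
    unfolding powers using \<sigma>(1) by (simp add: field_simps power2_eq_square)
  also have "\<dots> \<le> (lam^(n + 1) - lam^n) - B * cmod (\<mu>^(n + 1) - \<mu>^n)"
  proof -
    have "lam^(n + 1) - lam^n = \<sigma>^(2 * n) * (\<sigma>^2 - 1)"
      by (simp add: \<sigma>(2) algebra_simps flip: power_mult)
    moreover have "B \<ge> 0" unfolding B_def C1_def by (intro mult_nonneg_nonneg) (auto simp: le_max_iff_disj)
    ultimately show ?thesis using diff_bound by (simp add: mult_left_mono)
  qed
  also have "\<dots> \<le> (lam^(n + 1) - lam^n)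
      - (Re (\<mu>^(n + 1) - \<mu>^n) + kappa * Im (\<mu>^(n + 1) - \<mu>^n))"
    using conjugate_term_bound[of "\<mu>^(n + 1) - \<mu>^n"] by (simp add: B_def)
  also have "\<dots> = (3 * \<theta>^2 - of_int p) * (of_rat c' - of_rat c)"
    using theta_square_coeff_eq[OF conj(1)[symmetric]] theta_square_coeff_eq[OF conj(2)[symmetric]]
      assms(4,5) by (simp add: algebra_simps)
  finally have "of_rat c < (of_rat c' :: real)"
    using theta_square_coeff_factor_pos by (simp add: zero_less_mult_iff)
  then show "c' > c" by (simp add: of_rat_less)
qed

end

theorem mainTheorem9:
  fixes p q :: int and \<theta> lam :: real and d n :: nat
  assumes irr: "irreducible ([:- of_int q, - of_int p, 0, 1:] :: rat poly)"
    and root: "\<theta>^3 - of_int p * \<theta> - of_int q = 0"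
    and unique_root: "\<forall>x::real. x^3 - of_int p * x - of_int q = 0 \<longrightarrow> x = \<theta>"
    and d_pos: "d > 0"
    and d_OK: "OK_sub_dZtheta \<theta> d"
    and unit: "unit_OK \<theta> lam"
    and lam_gt: "lam > 1"
    and n_pos: "n \<ge> 1"
  shows "(lam powr (3 * real n / 2) > (1 + sqrt 2) * C1 p \<theta> \<longrightarrow>
           (\<forall>a b c :: rat. of_rat a + of_rat b * \<theta> + of_rat c * \<theta>^2 = lam^n \<longrightarrow> c > 0))
       \<and> (lam powr (3 * real n / 2) > (1 + sqrt 2) * C1 p \<theta> / (sqrt lam * (sqrt lam - 1)) \<longrightarrow>
           (\<forall>a b c a' b' c' :: rat.
               of_rat a + of_rat b * \<theta> + of_rat c * \<theta>^2 = lam^n \<longrightarrow>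
               of_rat a' + of_rat b' * \<theta> + of_rat c' * \<theta>^2 = lam^(n+1) \<longrightarrow> c' > c))"
proof -
  interpret cubic_one_real_root p q \<theta>
    using irr root unique_root by unfold_locales
  show ?thesis
    using theta_square_coeff_pos[OF unit lam_gt] theta_square_coeff_increasing[OF unit lam_gt]
    by blast
qed

end
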